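(* Let $H$ be a complex Hilbert space. Then: (1) if $\varphi_1,\varphi_2,\psi_1,\psi_2\in C[0,1]$ are real-valued, then for every $t\in[0,1]$, $$|n_t(\varphi_1,\psi_1;H)-n_t(\varphi_2,\psi_2;H)|\le|\varphi_1(t)-\varphi_2(t)|+|\psi_1(t)-\psi_2(t)|;$$ (2) if $\varphi,\psi,\varphi_n,\psi_n\in C[0,1]$ are real-valued and $\varphi_n\to\varphi$, $\psi_n\to\psi$ (pointwise on $[0,1]$), then for every $t\in[0,1]$, $n_t(\varphi,\psi;H)=\lim_{n\to\infty}n_t(\varphi_n,\psi_n;H)$.
   Context: $S_1(H)$ is the unit sphere of $H$; for real $\varphi,\psi$ on $[0,1]$, $\omega_t(\varphi,\psi;A)=\sup_{x\in S_1(H)}|\langle(\varphi(t)A+\psi(t)A^* )x,x\rangle|$, and the weighted numerical index is $n_t(\varphi,\psi;H)=\inf\{\omega_t(\varphi,\psi;A):A\in\mathbb{B}(H),\ \|A\|=1\}$. *)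

theory Defs
  imports "HOL-Analysis.Analysis"
begin

text \<open>A complex Hilbert space is such a space which is moreover complete.\<close>

class complex_inner = real_normed_vector +
  fixes scaleC :: "complex \<Rightarrow> 'a \<Rightarrow> 'a" (infixr \<open>*\<^sub>C\<close> 75)
    and cinner :: "'a \<Rightarrow> 'a \<Rightarrow> complex"
  assumes scaleC_add_right: "a *\<^sub>C (x + y) = a *\<^sub>C x + a *\<^sub>C y"
    and scaleC_add_left: "(a + b) *\<^sub>C x = a *\<^sub>C x + b *\<^sub>C x"
    and scaleC_scaleC: "a *\<^sub>C (b *\<^sub>C x) = (a * b) *\<^sub>C x"
    and scaleC_one: "1 *\<^sub>C x = x"
    and scaleC_of_real: "complex_of_real r *\<^sub>C x = r *\<^sub>R x"
    and cinner_commute: "cinner x y = cnj (cinner y x)"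
    and cinner_add_left: "cinner (x + y) z = cinner x z + cinner y z"
    and cinner_scaleC_left: "cinner (a *\<^sub>C x) y = a * cinner x y"
    and norm_eq_sqrt_cinner: "norm x = sqrt (Re (cinner x x))"

definition bounded_clinear_op :: "('a::complex_inner \<Rightarrow> 'a) \<Rightarrow> bool" where
  "bounded_clinear_op A \<longleftrightarrow>
     (\<forall>x y. A (x + y) = A x + A y) \<and> (\<forall>c x. A (c *\<^sub>C x) = c *\<^sub>C A x) \<and>
     (\<exists>K. \<forall>x. norm (A x) \<le> norm x * K)"

definition adjoint_op :: "('a::complex_inner \<Rightarrow> 'a) \<Rightarrow> ('a \<Rightarrow> 'a)" where
  "adjoint_op A = (SOME B. \<forall>x y. cinner (A x) y = cinner x (B y))"

definition omega_t :: "real \<Rightarrow> (real \<Rightarrow> real) \<Rightarrow> (real \<Rightarrow> real) \<Rightarrow> ('a::complex_inner \<Rightarrow> 'a) \<Rightarrow> real" where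
  "omega_t t \<phi> \<psi> A =
     Sup {cmod (cinner (\<phi> t *\<^sub>R A x + \<psi> t *\<^sub>R adjoint_op A x) x) | x. norm x = 1}"

definition num_index_t :: "'a::complex_inner itself \<Rightarrow> real \<Rightarrow> (real \<Rightarrow> real) \<Rightarrow> (real \<Rightarrow> real) \<Rightarrow> real" where
  "num_index_t H t \<phi> \<psi> =
     Inf {omega_t t \<phi> \<psi> (A :: 'a \<Rightarrow> 'a) | A. bounded_clinear_op A \<and> onorm A = 1}"

end

theory Submission
  imports Defs
begin

(* For an operator A of norm one, Cauchy-Schwarz bounds <A x, x> by 1 on the unit sphere, and
   <A* x, x> is its conjugate.  Hence the integrand |phi(t) <A x, x> + psi(t) <A* x, x>| of omega_t
   changes by at most |phi1(t) - phi2(t)| + |psi1(t) - psi2(t)| when the weights change; this bound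
   passes through the sup over the sphere and the inf over the operators, giving (1), and (2)
   follows from (1).
   Completeness is used only to obtain the adjoint, via the Riesz representation theorem: the real
   part of a bounded functional attains its norm on the unit ball, since by the parallelogram law
   maximizing sequences are Cauchy, and the maximizer is orthogonal to the kernel. *)

lemma cinner_add_right: "cinner (x::'a::complex_inner) (y + z) = cinner x y + cinner x z"
  by (metis cinner_add_left cinner_commute complex_cnj_add)

lemma cinner_zero_right [simp]: "cinner (x::'a::complex_inner) 0 = 0"
  using cinner_add_right[of x 0 0] by simp

lemma cinner_scaleC_right: "cinner (x::'a::complex_inner) (a *\<^sub>C y) = cnj a * cinner x y"
  by (metis cinner_scaleC_left cinner_commute complex_cnj_mult)

lemma cinner_scaleR_left: "cinner (r *\<^sub>R x::'a::complex_inner) y = r *\<^sub>R cinner x y"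
  by (metis cinner_scaleC_left scaleC_of_real scaleR_conv_of_real)

lemma cinner_diff_left: "cinner (x - y::'a::complex_inner) z = cinner x z - cinner y z"
  by (metis cinner_add_left diff_add_cancel eq_diff_eq)

lemma cinner_self: "cinner (x::'a::complex_inner) x = complex_of_real ((norm x)\<^sup>2)"
proof -
  have "Im (cinner x x) = 0"
    using cinner_commute[of x x] by (metis Reals_cnj_iff complex_is_Real_iff)
  moreover have "Re (cinner x x) = (norm x)\<^sup>2"
    by (metis norm_eq_sqrt_cinner norm_ge_zero real_sqrt_ge_0_iff real_sqrt_pow2)
  ultimately show ?thesis by (simp add: complex_eq_iff)
qed

lemma norm_add_scaleC_square:
  "(norm (x + a *\<^sub>C y :: 'a::complex_inner))\<^sup>2
     = (norm x)\<^sup>2 + 2 * Re (cnj a * cinner x y) + (cmod a)\<^sup>2 * (norm y)\<^sup>2"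
proof -
  have "cinner (x + a *\<^sub>C y) (x + a *\<^sub>C y)
      = cinner x x + cnj a * cinner x y + cnj (cnj a * cinner x y) + a * cnj a * cinner y y"
    by (simp add: cinner_add_left cinner_add_right cinner_scaleC_left cinner_scaleC_right
        cinner_commute[of y x] algebra_simps)
  then have "Re (complex_of_real ((norm (x + a *\<^sub>C y))\<^sup>2))
      = Re (complex_of_real ((norm x)\<^sup>2) + cnj a * cinner x y + cnj (cnj a * cinner x y)
          + complex_of_real ((cmod a)\<^sup>2 * (norm y)\<^sup>2))"
    by (simp only: cinner_self complex_norm_square of_real_mult)
  then show ?thesis by simp
qed

lemma cmod_cinner_le_norm_mult: "cmod (cinner (x::'a::complex_inner) y) \<le> norm x * norm y"
proof (cases "y = 0")
  case False
  define c where "c = cinner x y"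
  define n where "n = (norm y)\<^sup>2"
  have n: "n > 0" using False by (simp add: n_def)
  \<comment> \<open>the norm of x minus its projection onto y\<close>
  have "0 \<le> (norm (x + (- c / n) *\<^sub>C y))\<^sup>2" by simp
  also have "\<dots> = (norm x)\<^sup>2 - 2 * ((cmod c)\<^sup>2 / n) + (cmod c)\<^sup>2 / n\<^sup>2 * n"
    unfolding norm_add_scaleC_square c_def[symmetric] n_def[symmetric]
    by (simp add: norm_divide power_divide power2_eq_square cmod_power2[unfolded power2_eq_square])
  also have "\<dots> = (norm x)\<^sup>2 - (cmod c)\<^sup>2 / n"
    using n by (simp add: power2_eq_square)
  finally have "(cmod c)\<^sup>2 \<le> (norm x * norm y)\<^sup>2"
    using n by (simp add: n_def power_mult_distrib divide_le_eq)
  then show ?thesis unfolding c_def by (rule power2_le_imp_le) simp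
qed simp

lemma norm_diff_square_add_norm_add_square:
  "(norm (x - y :: 'a::complex_inner))\<^sup>2 + (norm (x + y))\<^sup>2 = 2 * (norm x)\<^sup>2 + 2 * (norm y)\<^sup>2"
  using norm_add_scaleC_square[of x 1 y] norm_add_scaleC_square[of x "-1" y]
  by (simp add: scaleC_one scaleC_of_real[of "-1", simplified])

lemma norm_diff_square_le_if_norm_add_ge:
  fixes x y :: "'a::complex_inner"
  assumes "norm x \<le> 1" "norm y \<le> 1" and sum: "2 - \<eta> \<le> norm (x + y)" and "0 \<le> \<eta>"
  shows "(norm (x - y))\<^sup>2 \<le> 4 * \<eta>"
proof -
  have diff: "(norm (x - y))\<^sup>2 \<le> 4 - (norm (x + y))\<^sup>2"
    using norm_diff_square_add_norm_add_square[of x y] assms(1,2) power_le_one[of "norm x" 2]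
      power_le_one[of "norm y" 2] by simp
  show ?thesis
  proof (cases "\<eta> \<le> 2")
    case True
    then have "(2 - \<eta>)\<^sup>2 \<le> (norm (x + y))\<^sup>2" using sum by (intro power_mono) auto
    then have "4 - 4 * \<eta> + \<eta>\<^sup>2 \<le> (norm (x + y))\<^sup>2" by (simp add: power2_diff)
    then show ?thesis using diff zero_le_power2[of \<eta>] by linarith
  next
    case False
    then show ?thesis using diff zero_le_power2[of "norm (x + y)"] by linarith
  qed
qed

lemma cinner_eq_0_if_norm_le_add_scaleC:
  fixes x y :: "'a::complex_inner"
  assumes min: "\<And>t. norm x \<le> norm (x + t *\<^sub>C y)"
  shows "cinner x y = 0"
proof -
  define c where "c = cinner x y"
  define s where "s = 1 / ((norm y)\<^sup>2 + 1)"
  have "0 < (norm y)\<^sup>2 + 1" using zero_le_power2[of "norm y"] by linarith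
  then have s: "0 < s" "s * (norm y)\<^sup>2 < 1" by (simp_all add: s_def field_simps)
  \<comment> \<open>the step s is small enough for the linear term to beat the quadratic one\<close>
  have "(norm x)\<^sup>2 \<le> (norm (x + (- s * c) *\<^sub>C y))\<^sup>2"
    using min by (simp add: power_mono)
  also have "\<dots> = (norm x)\<^sup>2 + (cmod c)\<^sup>2 * s * (s * (norm y)\<^sup>2 - 2)"
  proof -
    have "cnj (- s * c) * c = - complex_of_real s * (c * cnj c)" by (simp add: mult_ac)
    also have "\<dots> = - complex_of_real (s * (cmod c)\<^sup>2)"
      by (simp only: complex_norm_square of_real_mult mult_minus_left)
    finally have "Re (cnj (- s * c) * c) = Re (- complex_of_real (s * (cmod c)\<^sup>2))"
      by (rule arg_cong)
    then have "Re (cnj (- s * c) * c) = - s * (cmod c)\<^sup>2"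
      by (simp only: uminus_complex.sel Re_complex_of_real mult_minus_left)
    moreover have "(cmod (- s * c))\<^sup>2 = s\<^sup>2 * (cmod c)\<^sup>2"
      using s(1) by (simp add: norm_mult power_mult_distrib)
    ultimately show ?thesis
      unfolding norm_add_scaleC_square c_def[symmetric] by (simp add: power2_eq_square algebra_simps)
  qed
  finally have "0 \<le> (cmod c)\<^sup>2 * s * (s * (norm y)\<^sup>2 - 2)" by simp
  moreover have "s * (norm y)\<^sup>2 - 2 < 0" using s(2) by linarith
  ultimately have "(cmod c)\<^sup>2 * s \<le> 0" by (simp add: zero_le_mult_iff)
  then have "(cmod c)\<^sup>2 \<le> 0" using s(1) by (simp add: mult_le_0_iff)
  then show ?thesis by (simp add: c_def)
qed

lemma Cauchy_if_maximizing:
  fixes g :: "'a::complex_inner \<Rightarrow> real"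
  assumes add: "\<And>x y. g (x + y) = g x + g y"
    and le: "\<And>y. g y \<le> M * norm y" and "0 < M"
    and ball: "\<And>n. norm (xs n) \<le> 1" and max: "(\<lambda>n. g (xs n)) \<longlonglongrightarrow> M"
  shows "Cauchy xs"
proof (rule metric_CauchyI)
  fix e :: real assume "0 < e"
  define \<eta> where "\<eta> = e\<^sup>2 / 16"
  have "0 < \<eta>" using \<open>0 < e\<close> by (simp add: \<eta>_def)
  then have "M - M * \<eta> < M" using \<open>0 < M\<close> by simp
  from order_tendstoD(1)[OF max this] obtain N where N: "\<And>n. N \<le> n \<Longrightarrow> M - M * \<eta> < g (xs n)"
    by (auto simp: eventually_sequentially)
  have "dist (xs m) (xs n) < e" if "N \<le> m" "N \<le> n" for m n
  proof -
    have "M * (2 - 2 * \<eta>) < g (xs m + xs n)"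
      using N[OF that(1)] N[OF that(2)] by (simp add: add algebra_simps)
    also have "\<dots> \<le> M * norm (xs m + xs n)" by (rule le)
    finally have "2 - 2 * \<eta> \<le> norm (xs m + xs n)" using \<open>0 < M\<close> by simp
    then have "(norm (xs m - xs n))\<^sup>2 \<le> 4 * (2 * \<eta>)"
      using ball \<open>0 < \<eta>\<close> by (intro norm_diff_square_le_if_norm_add_ge) auto
    also have "\<dots> < e\<^sup>2" using \<open>0 < e\<close> by (simp add: \<eta>_def)
    finally show ?thesis
      using \<open>0 < e\<close> by (simp add: dist_norm power_less_imp_less_base)
  qed
  then show "\<exists>N. \<forall>m\<ge>N. \<forall>n\<ge>N. dist (xs m) (xs n) < e" by blast
qed

lemma bounded_linear_functional_attains_norm:
  fixes g :: "'a::{complex_inner,complete_space} \<Rightarrow> real"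
  assumes "bounded_linear g" and "g x0 \<noteq> 0"
  shows "\<exists>x. norm x = 1 \<and> 0 < g x \<and> (\<forall>y. g y \<le> g x * norm y)"
proof -
  interpret g: bounded_linear g by fact
  define B where "B = {x::'a. norm x \<le> 1}"
  define M where "M = Sup (g ` B)"
  obtain K where K: "\<And>x. norm (g x) \<le> norm x * K" and "0 < K" using g.pos_bounded by blast
  have "g x \<le> K" if "x \<in> B" for x
  proof -
    have "g x \<le> norm x * K" using K[of x] by simp
    also have "\<dots> \<le> K" using that \<open>0 < K\<close> by (simp add: B_def mult_left_le_one_le)
    finally show ?thesis .
  qed
  then have bdd: "bdd_above (g ` B)" by (rule bdd_aboveI2)
  have le_M: "g y \<le> M * norm y" for y
  proof (cases "y = 0")
    case False
    have "g (sgn y) \<le> M" unfolding M_def using bdd by (intro cSup_upper) (simp_all add: B_def norm_sgn)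
    then show ?thesis using False by (simp add: sgn_div_norm g.scaleR field_simps)
  qed (simp add: g.zero)
  have "0 < M"
  proof -
    have "0 < g x0 \<or> 0 < g (- x0)" using \<open>g x0 \<noteq> 0\<close> by (auto simp: g.neg)
    then obtain y where "0 < g y" by blast
    then have "0 < M * norm y" using le_M[of y] by linarith
    then show ?thesis by (simp add: zero_less_mult_iff)
  qed
  have "M \<in> closure (g ` B)"
    unfolding M_def using bdd by (intro closure_contains_Sup) (auto simp: B_def intro: exI[of _ 0])
  then obtain ys where ys_B: "\<And>n. ys n \<in> g ` B" and "ys \<longlonglongrightarrow> M"
    unfolding closure_sequential by blast
  have "\<exists>xs. \<forall>n. xs n \<in> B \<and> g (xs n) = ys n"
  proof (rule choice, rule allI)
    fix n
    from ys_B[of n] obtain x where "x \<in> B" and "ys n = g x" by (rule imageE)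
    then show "\<exists>x. x \<in> B \<and> g x = ys n" by auto
  qed
  then obtain xs where xs_B: "\<And>n. xs n \<in> B" and "\<And>n. g (xs n) = ys n" by blast
  with \<open>ys \<longlonglongrightarrow> M\<close> have g_xs: "(\<lambda>n. g (xs n)) \<longlonglongrightarrow> M" by simp
  have "Cauchy xs"
    by (rule Cauchy_if_maximizing[OF g.add le_M \<open>0 < M\<close> _ g_xs]) (use xs_B in \<open>simp add: B_def\<close>)
  then obtain x where "xs \<longlonglongrightarrow> x" using Cauchy_convergent_iff convergent_def by blast
  then have "norm x \<le> 1"
    using xs_B by (intro LIMSEQ_le_const2[OF tendsto_norm]) (auto simp: B_def)
  moreover have "g x = M" using LIMSEQ_unique[OF g.tendsto[OF \<open>xs \<longlonglongrightarrow> x\<close>] g_xs] .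
  moreover have "1 \<le> norm x" using le_M[of x] \<open>g x = M\<close> \<open>0 < M\<close> by simp
  ultimately show ?thesis using le_M \<open>0 < M\<close> by (intro exI[of _ x]) auto
qed

lemma riesz_representation:
  fixes f :: "'a::{complex_inner,complete_space} \<Rightarrow> complex"
  assumes add: "\<And>x y. f (x + y) = f x + f y" and scaleC: "\<And>c x. f (c *\<^sub>C x) = c * f x"
    and bounded: "\<And>x. cmod (f x) \<le> norm x * K"
  shows "\<exists>z. \<forall>x. f x = cinner x z"
proof (cases "\<forall>x. f x = 0")
  case False
  then obtain x0 where "f x0 \<noteq> 0" by blast
  have bl: "bounded_linear (\<lambda>x. Re (f x))"
  proof (rule bounded_linear_intro[where K = K])
    show "Re (f (r *\<^sub>R x)) = r *\<^sub>R Re (f x)" for r x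
      using scaleC[of "complex_of_real r" x] by (simp add: scaleC_of_real)
    show "norm (Re (f x)) \<le> norm x * K" for x
      using abs_Re_le_cmod[of "f x"] bounded[of x] by simp
  qed (simp add: add)
  have "f (cnj (f x0) *\<^sub>C x0) = complex_of_real ((cmod (f x0))\<^sup>2)"
    by (simp only: scaleC complex_norm_square mult.commute)
  then have "Re (f (cnj (f x0) *\<^sub>C x0)) \<noteq> 0" using \<open>f x0 \<noteq> 0\<close> by simp
  from bounded_linear_functional_attains_norm[OF bl this] obtain x
    where "norm x = 1" and "0 < Re (f x)" and max: "\<And>y. Re (f y) \<le> Re (f x) * norm y"
    by blast
  have orth: "cinner x y = 0" if "f y = 0" for y
  proof (rule cinner_eq_0_if_norm_le_add_scaleC)
    show "norm x \<le> norm (x + t *\<^sub>C y)" for t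
      using max[of "x + t *\<^sub>C y"] \<open>0 < Re (f x)\<close> \<open>norm x = 1\<close> by (simp add: add scaleC that)
  qed
  have "f y = cinner y (cnj (f x) *\<^sub>C x)" for y
  proof -
    have "f x \<noteq> 0" using \<open>0 < Re (f x)\<close> by auto
    then have "f (y - (f y / f x) *\<^sub>C x) = 0"
      using add[of "y - (f y / f x) *\<^sub>C x" "(f y / f x) *\<^sub>C x"] by (simp add: scaleC)
    then have "cinner (y - (f y / f x) *\<^sub>C x) x = 0"
      using orth cinner_commute by (metis complex_cnj_zero)
    then show ?thesis using \<open>f x \<noteq> 0\<close>
      by (simp add: cinner_diff_left cinner_scaleC_left cinner_scaleC_right cinner_self \<open>norm x = 1\<close>)
  qed
  then show ?thesis by blast
qed (auto intro: exI[of _ 0])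

lemma bounded_clinear_op_imp_bounded_linear:
  "bounded_clinear_op (A::'a::complex_inner \<Rightarrow> 'a) \<Longrightarrow> bounded_linear A"
  unfolding bounded_clinear_op_def by (metis bounded_linear_intro scaleC_of_real)

lemma cinner_adjoint_op:
  fixes A :: "'a::{complex_inner,complete_space} \<Rightarrow> 'a"
  assumes "bounded_clinear_op A"
  shows "cinner (A x) y = cinner x (adjoint_op A y)"
proof -
  obtain K where K: "\<And>x. norm (A x) \<le> norm x * K"
    using assms unfolding bounded_clinear_op_def by blast
  have "\<exists>z. \<forall>x. cinner (A x) y = cinner x z" for y
  proof (rule riesz_representation[where K = "K * norm y"])
    show "cinner (A (x + x')) y = cinner (A x) y + cinner (A x') y" for x x'
      using assms unfolding bounded_clinear_op_def by (simp add: cinner_add_left)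
    show "cinner (A (c *\<^sub>C x)) y = c * cinner (A x) y" for c x
      using assms unfolding bounded_clinear_op_def by (simp add: cinner_scaleC_left)
    show "cmod (cinner (A x) y) \<le> norm x * (K * norm y)" for x
    proof -
      have "cmod (cinner (A x) y) \<le> norm (A x) * norm y" by (rule cmod_cinner_le_norm_mult)
      also have "\<dots> \<le> norm x * K * norm y" using K[of x] by (rule mult_right_mono) simp
      finally show ?thesis by (simp add: mult.assoc)
    qed
  qed
  then have "\<exists>B. \<forall>x y. cinner (A x) y = cinner x (B y)" by metis
  from someI_ex[OF this] show ?thesis unfolding adjoint_op_def by blast
qed

lemma cmod_cinner_le_onorm:
  assumes "bounded_clinear_op A"
  shows "cmod (cinner (A x) x) \<le> onorm A * (norm x)\<^sup>2"
proof -
  have "cmod (cinner (A x) x) \<le> norm (A x) * norm x" by (rule cmod_cinner_le_norm_mult)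
  also have "\<dots> \<le> onorm A * norm x * norm x"
    using onorm[OF bounded_clinear_op_imp_bounded_linear[OF assms]] by (rule mult_right_mono) simp
  finally show ?thesis by (simp add: power2_eq_square mult.assoc)
qed

lemma cinner_adjoint_op_self:
  fixes A :: "'a::{complex_inner,complete_space} \<Rightarrow> 'a"
  shows "bounded_clinear_op A \<Longrightarrow> cinner (adjoint_op A x) x = cnj (cinner (A x) x)"
  by (metis cinner_adjoint_op cinner_commute)

lemma cSUP_diff_abs_le:
  fixes f g :: "'b \<Rightarrow> real"
  assumes "X \<noteq> {}" and "bdd_above (f ` X)" and "bdd_above (g ` X)"
    and "\<And>x. x \<in> X \<Longrightarrow> \<bar>f x - g x\<bar> \<le> \<delta>"
  shows "\<bar>(SUP x\<in>X. f x) - (SUP x\<in>X. g x)\<bar> \<le> \<delta>"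
proof -
  have "(SUP x\<in>X. f x) \<le> (SUP x\<in>X. g x) + \<delta>"
    if "bdd_above (g ` X)" and "\<And>x. x \<in> X \<Longrightarrow> f x \<le> g x + \<delta>" for f g :: "'b \<Rightarrow> real"
    using \<open>X \<noteq> {}\<close> by (rule cSUP_least) (use that cSUP_upper in \<open>fastforce intro: order_trans\<close>)
  from this[of g f] this[of f g] show ?thesis using assms(2-4) by (force simp: abs_le_iff)
qed

lemma cINF_diff_abs_le:
  fixes f g :: "'b \<Rightarrow> real"
  assumes "X \<noteq> {}" and "bdd_below (f ` X)" and "bdd_below (g ` X)"
    and "\<And>x. x \<in> X \<Longrightarrow> \<bar>f x - g x\<bar> \<le> \<delta>"
  shows "\<bar>(INF x\<in>X. f x) - (INF x\<in>X. g x)\<bar> \<le> \<delta>"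
proof -
  have "(INF x\<in>X. g x) - \<delta> \<le> (INF x\<in>X. f x)"
    if "bdd_below (g ` X)" and "\<And>x. x \<in> X \<Longrightarrow> g x - \<delta> \<le> f x" for f g :: "'b \<Rightarrow> real"
    using \<open>X \<noteq> {}\<close> by (rule cINF_greatest) (use that cINF_lower in \<open>fastforce intro: order_trans\<close>)
  from this[of g f] this[of f g] show ?thesis using assms(2-4) by (force simp: abs_le_iff)
qed

lemma norm_scaleR_add_diff_le:
  fixes u v :: "'a::real_normed_vector"
  shows "\<bar>norm (a *\<^sub>R u + b *\<^sub>R v) - norm (a' *\<^sub>R u + b' *\<^sub>R v)\<bar>
           \<le> \<bar>a - a'\<bar> * norm u + \<bar>b - b'\<bar> * norm v"
proof -
  have "\<bar>norm (a *\<^sub>R u + b *\<^sub>R v) - norm (a' *\<^sub>R u + b' *\<^sub>R v)\<bar>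
      \<le> norm ((a - a') *\<^sub>R u + (b - b') *\<^sub>R v)"
    using norm_triangle_ineq3 by (simp add: algebra_simps)
  also have "\<dots> \<le> \<bar>a - a'\<bar> * norm u + \<bar>b - b'\<bar> * norm v"
    using norm_triangle_ineq[of "(a - a') *\<^sub>R u" "(b - b') *\<^sub>R v"] by simp
  finally show ?thesis .
qed

lemma ex_norm_eq_1_if_onorm_nonzero:
  fixes A :: "'a::real_normed_vector \<Rightarrow> 'b::real_normed_vector"
  assumes "bounded_linear A" and "onorm A \<noteq> 0"
  shows "\<exists>x::'a. norm x = 1"
proof -
  interpret A: bounded_linear A by fact
  obtain x where "A x \<noteq> 0" using assms onorm_eq_0 by blast
  then have "x \<noteq> 0" using A.zero by auto
  then show ?thesis by (intro exI[of _ "sgn x"]) (simp add: norm_sgn)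
qed

lemma omega_t_eq_SUP:
  "omega_t t \<phi> \<psi> A
     = (SUP x\<in>{x. norm x = 1}. cmod (\<phi> t *\<^sub>R cinner (A x) x + \<psi> t *\<^sub>R cinner (adjoint_op A x) x))"
  unfolding omega_t_def by (simp add: setcompr_eq_image cinner_add_left cinner_scaleR_left)

lemma omega_t_integrand_diff_le:
  fixes A :: "'a::{complex_inner,complete_space} \<Rightarrow> 'a"
  assumes A: "bounded_clinear_op A" "onorm A = 1" and "norm x = 1"
  shows "\<bar>cmod (a *\<^sub>R cinner (A x) x + b *\<^sub>R cinner (adjoint_op A x) x)
           - cmod (a' *\<^sub>R cinner (A x) x + b' *\<^sub>R cinner (adjoint_op A x) x)\<bar>
         \<le> \<bar>a - a'\<bar> + \<bar>b - b'\<bar>"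
proof -
  have form_le: "cmod (cinner (A x) x) \<le> 1"
    using cmod_cinner_le_onorm[OF A(1), of x] A(2) \<open>norm x = 1\<close> by simp
  then have adjoint_form_le: "cmod (cinner (adjoint_op A x) x) \<le> 1"
    by (simp add: cinner_adjoint_op_self[OF A(1)])
  have "\<bar>a - a'\<bar> * cmod (cinner (A x) x) + \<bar>b - b'\<bar> * cmod (cinner (adjoint_op A x) x)
      \<le> \<bar>a - a'\<bar> + \<bar>b - b'\<bar>"
    using form_le adjoint_form_le by (intro add_mono mult_left_le) auto
  with norm_scaleR_add_diff_le show ?thesis by (rule order_trans)
qed

lemma omega_t_integrand_bdd_above:
  fixes A :: "'a::{complex_inner,complete_space} \<Rightarrow> 'a"
  assumes "bounded_clinear_op A" "onorm A = 1"
  shows "bdd_above ((\<lambda>x. cmod (a *\<^sub>R cinner (A x) x + b *\<^sub>R cinner (adjoint_op A x) x)) ` {x. norm x = 1})"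
proof (rule bdd_aboveI2)
  fix x :: 'a assume "x \<in> {x. norm x = 1}"
  then show "cmod (a *\<^sub>R cinner (A x) x + b *\<^sub>R cinner (adjoint_op A x) x) \<le> \<bar>a\<bar> + \<bar>b\<bar>"
    using omega_t_integrand_diff_le[OF assms, of x a b 0 0] by simp
qed

lemma omega_t_lipschitz:
  fixes A :: "'a::{complex_inner,complete_space} \<Rightarrow> 'a"
  assumes "bounded_clinear_op A" "onorm A = 1"
  shows "\<bar>omega_t t \<phi>1 \<psi>1 A - omega_t t \<phi>2 \<psi>2 A\<bar> \<le> \<bar>\<phi>1 t - \<phi>2 t\<bar> + \<bar>\<psi>1 t - \<psi>2 t\<bar>"
  unfolding omega_t_eq_SUP
proof (rule cSUP_diff_abs_le)
  show "{x::'a. norm x = 1} \<noteq> {}"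
    using ex_norm_eq_1_if_onorm_nonzero[OF bounded_clinear_op_imp_bounded_linear[OF assms(1)]] assms(2)
    by auto
  show "\<bar>cmod (\<phi>1 t *\<^sub>R cinner (A x) x + \<psi>1 t *\<^sub>R cinner (adjoint_op A x) x)
          - cmod (\<phi>2 t *\<^sub>R cinner (A x) x + \<psi>2 t *\<^sub>R cinner (adjoint_op A x) x)\<bar>
        \<le> \<bar>\<phi>1 t - \<phi>2 t\<bar> + \<bar>\<psi>1 t - \<psi>2 t\<bar>" if "x \<in> {x. norm x = 1}" for x
    using omega_t_integrand_diff_le[OF assms] that by simp
qed (rule omega_t_integrand_bdd_above[OF assms])+

lemma omega_t_nonneg:
  fixes A :: "'a::{complex_inner,complete_space} \<Rightarrow> 'a"
  assumes "bounded_clinear_op A" "onorm A = 1"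
  shows "0 \<le> omega_t t \<phi> \<psi> A"
proof -
  obtain x :: 'a where "norm x = 1"
    using ex_norm_eq_1_if_onorm_nonzero[OF bounded_clinear_op_imp_bounded_linear[OF assms(1)]] assms(2)
    by auto
  then show ?thesis unfolding omega_t_eq_SUP
    using omega_t_integrand_bdd_above[OF assms] by (intro cSUP_upper2) auto
qed

lemma num_index_t_lipschitz:
  fixes H :: "'a::{complex_inner,complete_space} itself"
  shows "\<bar>num_index_t H t \<phi>1 \<psi>1 - num_index_t H t \<phi>2 \<psi>2\<bar> \<le> \<bar>\<phi>1 t - \<phi>2 t\<bar> + \<bar>\<psi>1 t - \<psi>2 t\<bar>"
proof -
  define X where "X = {A::'a \<Rightarrow> 'a. bounded_clinear_op A \<and> onorm A = 1}"
  have num_index: "num_index_t H t \<phi> \<psi> = (INF A\<in>X. omega_t t \<phi> \<psi> A)" for \<phi> \<psi>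
    unfolding num_index_t_def X_def by (simp add: setcompr_eq_image)
  \<comment> \<open>if there is no operator of norm one (H = {0}), both sides are the junk value Inf {}\<close>
  show ?thesis
  proof (cases "X = {}")
    case False
    have bdd: "bdd_below ((\<lambda>A. omega_t t \<phi> \<psi> A) ` X)" for \<phi> \<psi>
      by (rule bdd_belowI2[where m = 0]) (simp add: X_def omega_t_nonneg)
    show ?thesis unfolding num_index
    proof (rule cINF_diff_abs_le[OF False bdd bdd])
      show "\<bar>omega_t t \<phi>1 \<psi>1 A - omega_t t \<phi>2 \<psi>2 A\<bar> \<le> \<bar>\<phi>1 t - \<phi>2 t\<bar> + \<bar>\<psi>1 t - \<psi>2 t\<bar>"
        if "A \<in> X" for A
        using that by (simp add: X_def omega_t_lipschitz)
    qed
  qed (simp add: num_index)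
qed

lemma num_index_t_tendsto:
  fixes H :: "'a::{complex_inner,complete_space} itself"
  assumes "(\<lambda>n. \<phi>s n t) \<longlonglongrightarrow> \<phi> t" and "(\<lambda>n. \<psi>s n t) \<longlonglongrightarrow> \<psi> t"
  shows "(\<lambda>n. num_index_t H t (\<phi>s n) (\<psi>s n)) \<longlonglongrightarrow> num_index_t H t \<phi> \<psi>"
proof -
  have "(\<lambda>n. \<bar>\<phi>s n t - \<phi> t\<bar> + \<bar>\<psi>s n t - \<psi> t\<bar>) \<longlonglongrightarrow> 0"
    using tendsto_add[OF tendsto_rabs_zero[OF LIM_zero[OF assms(1)]]
        tendsto_rabs_zero[OF LIM_zero[OF assms(2)]]]
    by simp
  then have "(\<lambda>n. num_index_t H t (\<phi>s n) (\<psi>s n) - num_index_t H t \<phi> \<psi>) \<longlonglongrightarrow> 0"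
    by (rule Lim_null_comparison[rotated]) (simp add: num_index_t_lipschitz)
  then show ?thesis by (simp add: LIM_zero_iff)
qed

theorem theorem4p8:
  fixes H :: "'a::{complex_inner, complete_space} itself"
  shows "(\<forall>\<phi>1 \<phi>2 \<psi>1 \<psi>2 :: real \<Rightarrow> real.
            continuous_on {0..1} \<phi>1 \<longrightarrow> continuous_on {0..1} \<phi>2 \<longrightarrow>
            continuous_on {0..1} \<psi>1 \<longrightarrow> continuous_on {0..1} \<psi>2 \<longrightarrow>
            (\<forall>t\<in>{0..1}.
               \<bar>num_index_t H t \<phi>1 \<psi>1 - num_index_t H t \<phi>2 \<psi>2\<bar>
                 \<le> \<bar>\<phi>1 t - \<phi>2 t\<bar> + \<bar>\<psi>1 t - \<psi>2 t\<bar>))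
       \<and> (\<forall>(\<phi>::real \<Rightarrow> real) (\<psi>::real \<Rightarrow> real) (\<phi>s::nat \<Rightarrow> real \<Rightarrow> real) (\<psi>s::nat \<Rightarrow> real \<Rightarrow> real).
            continuous_on {0..1} \<phi> \<longrightarrow> continuous_on {0..1} \<psi> \<longrightarrow>
            (\<forall>n. continuous_on {0..1} (\<phi>s n)) \<longrightarrow> (\<forall>n. continuous_on {0..1} (\<psi>s n)) \<longrightarrow>
            (\<forall>t\<in>{0..1}. (\<lambda>n. \<phi>s n t) \<longlonglongrightarrow> \<phi> t) \<longrightarrow>
            (\<forall>t\<in>{0..1}. (\<lambda>n. \<psi>s n t) \<longlonglongrightarrow> \<psi> t) \<longrightarrow>
            (\<forall>t\<in>{0..1}. (\<lambda>n. num_index_t H t (\<phi>s n) (\<psi>s n)) \<longlonglongrightarrow> num_index_t H t \<phi> \<psi>))"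
proof (intro conjI allI impI ballI)
  fix \<phi>1 \<phi>2 \<psi>1 \<psi>2 :: "real \<Rightarrow> real" and t :: real
  show "\<bar>num_index_t H t \<phi>1 \<psi>1 - num_index_t H t \<phi>2 \<psi>2\<bar> \<le> \<bar>\<phi>1 t - \<phi>2 t\<bar> + \<bar>\<psi>1 t - \<psi>2 t\<bar>"
    by (rule num_index_t_lipschitz)
next
  fix \<phi> \<psi> :: "real \<Rightarrow> real" and \<phi>s \<psi>s :: "nat \<Rightarrow> real \<Rightarrow> real" and t :: real
  assume "\<forall>t\<in>{0..1}. (\<lambda>n. \<phi>s n t) \<longlonglongrightarrow> \<phi> t" and "\<forall>t\<in>{0..1}. (\<lambda>n. \<psi>s n t) \<longlonglongrightarrow> \<psi> t"
    and "t \<in> {0..1}"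
  then show "(\<lambda>n. num_index_t H t (\<phi>s n) (\<psi>s n)) \<longlonglongrightarrow> num_index_t H t \<phi> \<psi>"
    by (intro num_index_t_tendsto) simp_all
qed

end
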